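(* Let $A=\{a_1,a_2,\ldots,a_k\}$ be a set of $k\ge1$ distinct positive integers, let $\tau$ be a permutation of $\{1,2,\ldots,k\}$, and let $A_{\tau(j)}=\{a_{\tau(1)},\ldots,a_{\tau(j)}\}$ for $j=1,\ldots,k$, with $A_{\tau(0)}=\emptyset$. Then the following are equivalent: (a) No $2$-element subset of $A$ is relatively prime (i.e. $\gcd(a,b)>1$ for all distinct $a,b\in A$). (b) \[ \sum_{d=1}^{\sup A} \mu(d)\, v(A,d)\,(v(A,d)-1) = 0. \] (c) \[ \sum_{j=1}^k \sum_{d\mid a_{\tau(j)}} \mu(d)\, v(A_{\tau(j-1)},d) = 0. \]
   Context: $\sup A$ is the largest element of $A$. $\mu$ is the Möbius function. For a finite set $X$ of positive integers and a positive integer $d$, $v(X,d)$ is the number of multiples of $d$ in $X$ (so $v(\emptyset,d)=0$). *)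

theory Defs
  imports "HOL-Computational_Algebra.Computational_Algebra"
          "HOL-Combinatorics.Permutations"
begin

definition moebius_mu :: "nat \<Rightarrow> int" where
  "moebius_mu n = (if n = 0 then 0 else if squarefree n then (-1) ^ card (prime_factors n) else 0)"

definition v :: "nat set \<Rightarrow> nat \<Rightarrow> nat" where
  "v X d = card {x \<in> X. d dvd x}"

end

theory Submission
  imports Defs
begin

text \<open>
  Summing \<mu> over the divisors of y sieves out the elements coprime to y:
  \<Sum>d|y. \<mu>(d) v(B,d) = #{x \<in> B. coprime x y}. Since v(A,d)(v(A,d) - 1) is the sum of
  v(A - {y}, d) over the multiples y of d in A, the sum in (b) counts the ordered pairs of
  distinct coprime elements of A, and the sum in (c) counts the pairs i < j with a(\<tau> i)
  coprime to a(\<tau> j). Both counts vanish exactly when (a) holds.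
\<close>

lemma prime_factors_prod_primes:
  assumes "finite P" "\<forall>p\<in>P. prime (p::nat)"
  shows "prime_factors (\<Prod>P) = P"
proof -
  have "prime_factors (\<Prod>P) = \<Union>((prime_factors \<circ> id) ` P)"
    using assms by (subst prime_factors_prod) auto
  also have "\<dots> = P" using assms by (auto simp: prime_prime_factors)
  finally show ?thesis .
qed

lemma squarefree_prod_primes:
  assumes "finite P" "\<forall>p\<in>P. prime (p::nat)"
  shows "squarefree (\<Prod>P)"
  using assms by (intro squarefree_prod_coprime) (auto simp: primes_coprime squarefree_prime)

lemma squarefree_eq_prod_prime_factors:
  assumes "squarefree (d::nat)"
  shows "d = \<Prod>(prime_factors d)"
proof -
  have "d \<noteq> 0" using assms not_squarefree_0 by metis
  hence "d = (\<Prod>p \<in> prime_factors d. p ^ multiplicity p d)"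
    by (simp add: prime_factorization_nat)
  also have "\<dots> = \<Prod>(prime_factors d)"
    using squarefree_factorial_semiring'[OF \<open>d \<noteq> 0\<close>] assms by (intro prod.cong) auto
  finally show ?thesis .
qed

lemma prod_prime_factors_dvd:
  assumes "(n::nat) > 0"
  shows "\<Prod>(prime_factors n) dvd n"
proof -
  have "\<Prod>(prime_factors n) dvd (\<Prod>p\<in>prime_factors n. p ^ multiplicity p n)"
    by (intro prod_dvd_prod) (auto simp: prime_factors_multiplicity intro!: dvd_power)
  also have "\<dots> = n" using prime_factorization_nat[OF assms] by simp
  finally show ?thesis .
qed

lemma moebius_mu_prod_primes:
  assumes "finite P" "\<forall>p\<in>P. prime (p::nat)"
  shows "moebius_mu (\<Prod>P) = (-1) ^ card P"
proof -
  have "\<Prod>P \<noteq> 0" using assms by (auto simp: prime_gt_0_nat)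
  then show ?thesis
    using squarefree_prod_primes[OF assms] prime_factors_prod_primes[OF assms]
    by (simp add: moebius_mu_def)
qed

lemma bij_betw_prod_squarefree_divisors:
  assumes "(n::nat) > 0"
  shows "bij_betw (\<lambda>P. \<Prod>P) (Pow (prime_factors n)) {d. d dvd n \<and> squarefree d}"
proof (rule bij_betw_byWitness[where f' = prime_factors])
  show "\<forall>P\<in>Pow (prime_factors n). prime_factors (\<Prod>P) = P"
    by (auto intro!: prime_factors_prod_primes dest: finite_subset in_prime_factors_imp_prime)
  show "\<forall>d\<in>{d. d dvd n \<and> squarefree d}. \<Prod>(prime_factors d) = d"
    using squarefree_eq_prod_prime_factors by auto
  show "prime_factors ` {d. d dvd n \<and> squarefree d} \<subseteq> Pow (prime_factors n)"
    using assms by (auto simp: in_prime_factors_iff intro: dvd_trans)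
  show "(\<lambda>P. \<Prod>P) ` Pow (prime_factors n) \<subseteq> {d. d dvd n \<and> squarefree d}"
  proof clarify
    fix P assume P: "P \<subseteq> prime_factors n"
    have P_primes: "finite P" "\<forall>p\<in>P. prime p"
      using P finite_subset in_prime_factors_imp_prime by blast+
    have "\<Prod>P dvd \<Prod>(prime_factors n)"
      using P by (intro prod_dvd_prod_subset) auto
    then show "\<Prod>P dvd n \<and> squarefree (\<Prod>P)"
      using dvd_trans[OF _ prod_prime_factors_dvd[OF assms]] squarefree_prod_primes[OF P_primes]
      by simp
  qed
qed

lemma sum_Pow_neg_one_power_card:
  assumes "finite S"
  shows "(\<Sum>X\<in>Pow S. (-1::int) ^ card X) = (if S = {} then 1 else 0)"
  using prod_diff_conv_sum[OF assms, of "\<lambda>_. 1" "\<lambda>_. 1 :: int"] assms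
  by (simp add: power_0_left card_eq_0_iff)

lemma sum_moebius_mu_divisors:
  assumes "(n::nat) > 0"
  shows "(\<Sum>d | d dvd n. moebius_mu d) = (if n = 1 then 1 else 0)"
proof -
  have "(\<Sum>d | d dvd n. moebius_mu d) = (\<Sum>d | d dvd n \<and> squarefree d. moebius_mu d)"
    using assms by (intro sum.mono_neutral_right) (auto simp: moebius_mu_def)
  also have "\<dots> = (\<Sum>P\<in>Pow (prime_factors n). moebius_mu (\<Prod>P))"
    by (rule sum.reindex_bij_betw[OF bij_betw_prod_squarefree_divisors[OF assms], symmetric])
  also have "\<dots> = (\<Sum>P\<in>Pow (prime_factors n). (-1) ^ card P)"
    by (intro sum.cong refl moebius_mu_prod_primes)
       (auto dest: finite_subset in_prime_factors_imp_prime)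
  also have "\<dots> = (if n = 1 then 1 else 0)"
    using assms by (simp add: sum_Pow_neg_one_power_card prime_factorization_empty_iff)
  finally show ?thesis .
qed

lemma sum_moebius_mu_v_divisors:
  assumes "finite B" "y > (0::nat)"
  shows "(\<Sum>d | d dvd y. moebius_mu d * int (v B d)) = int (card {x\<in>B. coprime x y})"
proof -
  have "(\<Sum>d | d dvd y. moebius_mu d * int (v B d))
      = (\<Sum>d | d dvd y. \<Sum>x\<in>B. if d dvd x then moebius_mu d else 0)"
    using assms(1) by (simp add: v_def sum.If_cases Int_def mult.commute)
  also have "\<dots> = (\<Sum>x\<in>B. \<Sum>d | d dvd y. if d dvd x then moebius_mu d else 0)"
    by (rule sum.swap)
  also have "\<dots> = (\<Sum>x\<in>B. \<Sum>d | d dvd gcd x y. moebius_mu d)"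
  proof (rule sum.cong[OF refl])
    fix x
    have "{d \<in> {d. d dvd y}. d dvd x} = {d. d dvd gcd x y}" by auto
    then show "(\<Sum>d | d dvd y. if d dvd x then moebius_mu d else 0) = (\<Sum>d | d dvd gcd x y. moebius_mu d)"
      using assms(2) by (simp flip: sum.inter_filter)
  qed
  also have "\<dots> = (\<Sum>x\<in>B. if coprime x y then 1 else 0)"
  proof (rule sum.cong[OF refl])
    fix x
    have "gcd x y > 0" using assms(2) by simp
    then show "(\<Sum>d | d dvd gcd x y. moebius_mu d) = (if coprime x y then 1 else 0)"
      by (simp only: sum_moebius_mu_divisors coprime_iff_gcd_eq_1)
  qed
  also have "\<dots> = int (card {x\<in>B. coprime x y})"
    using assms(1) by (simp add: sum.If_cases Int_def)
  finally show ?thesis .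
qed

lemma sum_upto_divisors:
  assumes "(y::nat) > 0" "y \<le> M"
  shows "(\<Sum>d = 1..M. if d dvd y then f d else 0) = (\<Sum>d | d dvd y. f d)"
proof -
  have "d \<in> {1..M}" if "d dvd y" for d
    using dvd_imp_le[OF that assms(1)] dvd_pos_nat[OF assms(1) that] assms(2) by auto
  then have "{d \<in> {1..M}. d dvd y} = {d. d dvd y}" by blast
  then show ?thesis by (simp flip: sum.inter_filter)
qed

lemma v_times_v_minus_one:
  assumes "finite A"
  shows "int (v A d) * (int (v A d) - 1) = (\<Sum>y\<in>A. if d dvd y then int (v (A - {y}) d) else 0)"
proof -
  define C where "C = {x\<in>A. d dvd x}"
  have "finite C" using assms by (simp add: C_def)
  have "(\<Sum>y\<in>A. if d dvd y then int (v (A - {y}) d) else 0) = (\<Sum>y\<in>C. int (v (A - {y}) d))"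
    by (simp add: sum.inter_filter[symmetric] assms C_def)
  also have "\<dots> = (\<Sum>y\<in>C. int (card C) - 1)"
  proof (intro sum.cong refl)
    fix y assume "y \<in> C"
    then have "Suc (card (C - {y})) = card C"
      by (rule card_Suc_Diff1[OF \<open>finite C\<close>])
    then have "int (card C) = int (card (C - {y})) + 1"
      by (metis of_nat_Suc add.commute)
    moreover have "{x \<in> A - {y}. d dvd x} = C - {y}" by (auto simp: C_def)
    ultimately show "int (v (A - {y}) d) = int (card C) - 1"
      by (simp add: v_def)
  qed
  also have "\<dots> = int (v A d) * (int (v A d) - 1)" by (simp add: v_def C_def)
  finally show ?thesis by simp
qed

lemma sum_moebius_mu_v_pairs:
  assumes "finite A" "\<forall>x\<in>A. x > 0" "\<forall>x\<in>A. x \<le> M"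
  shows "(\<Sum>d = 1..M. moebius_mu d * int (v A d) * (int (v A d) - 1))
       = (\<Sum>y\<in>A. int (card {x\<in>A - {y}. coprime x y}))"
proof -
  have "(\<Sum>d = 1..M. moebius_mu d * int (v A d) * (int (v A d) - 1))
      = (\<Sum>d = 1..M. \<Sum>y\<in>A. if d dvd y then moebius_mu d * int (v (A - {y}) d) else 0)"
    by (intro sum.cong refl)
       (simp add: mult.assoc v_times_v_minus_one[OF assms(1)] sum_distrib_left if_distrib cong: if_cong)
  also have "\<dots> = (\<Sum>y\<in>A. \<Sum>d = 1..M. if d dvd y then moebius_mu d * int (v (A - {y}) d) else 0)"
    by (rule sum.swap)
  also have "\<dots> = (\<Sum>y\<in>A. int (card {x\<in>A - {y}. coprime x y}))"
  proof (intro sum.cong refl)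
    fix y assume "y \<in> A"
    then have "y > 0" "y \<le> M" using assms by auto
    then have "(\<Sum>d = 1..M. if d dvd y then moebius_mu d * int (v (A - {y}) d) else 0)
        = (\<Sum>d | d dvd y. moebius_mu d * int (v (A - {y}) d))"
      by (rule sum_upto_divisors)
    also have "\<dots> = int (card {x\<in>A - {y}. coprime x y})"
      using assms(1) \<open>y > 0\<close> by (intro sum_moebius_mu_v_divisors) auto
    finally show "(\<Sum>d = 1..M. if d dvd y then moebius_mu d * int (v (A - {y}) d) else 0)
        = int (card {x\<in>A - {y}. coprime x y})" .
  qed
  finally show ?thesis .
qed

lemma prefix_pairs_iff_pairs:
  fixes k :: nat
  assumes "inj_on b {1..k}" and sym: "\<And>x y. R x y \<longleftrightarrow> R y x"
  shows "(\<forall>j\<in>{1..k}. \<forall>x\<in>b ` {1..j - 1}. R x (b j))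
     \<longleftrightarrow> (\<forall>x\<in>b ` {1..k}. \<forall>y\<in>b ` {1..k}. x \<noteq> y \<longrightarrow> R x y)"
proof
  assume prefix: "\<forall>j\<in>{1..k}. \<forall>x\<in>b ` {1..j - 1}. R x (b j)"
  have R_b: "R (b i) (b j)" if "i \<in> {1..k}" "j \<in> {1..k}" "i \<noteq> j" for i j
  proof (cases "i < j")
    case True
    then have "i \<in> {1..j - 1}" using that by auto
    then show ?thesis using prefix that by blast
  next
    case False
    then have "j \<in> {1..i - 1}" using that by auto
    then have "R (b j) (b i)" using prefix that by blast
    then show ?thesis using sym by blast
  qed
  show "\<forall>x\<in>b ` {1..k}. \<forall>y\<in>b ` {1..k}. x \<noteq> y \<longrightarrow> R x y"
  proof (intro ballI impI)
    fix x y assume "x \<in> b ` {1..k}" "y \<in> b ` {1..k}" "x \<noteq> y"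
    then obtain i j where "i \<in> {1..k}" "j \<in> {1..k}" "x = b i" "y = b j" "i \<noteq> j" by blast
    then show "R x y" using R_b by blast
  qed
next
  assume pairs: "\<forall>x\<in>b ` {1..k}. \<forall>y\<in>b ` {1..k}. x \<noteq> y \<longrightarrow> R x y"
  show "\<forall>j\<in>{1..k}. \<forall>x\<in>b ` {1..j - 1}. R x (b j)"
  proof (intro ballI)
    fix j x assume j: "j \<in> {1..k}" and "x \<in> b ` {1..j - 1}"
    then obtain i where i: "i \<in> {1..j - 1}" "x = b i" by blast
    then have "i \<in> {1..k}" "i \<noteq> j" using j by auto
    then have "b i \<noteq> b j" using inj_on_eq_iff[OF assms(1)] j by blast
    then show "R x (b j)" using pairs i \<open>i \<in> {1..k}\<close> j by blast
  qed
qed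

lemma sum_card_eq_0_iff:
  assumes "finite I" "\<forall>i\<in>I. finite (S i)"
  shows "(\<Sum>i\<in>I. int (card (S i))) = 0 \<longleftrightarrow> (\<forall>i\<in>I. S i = {})"
  using assms by (simp add: sum_nonneg_eq_0_iff)

lemma sum_moebius_mu_v_pairs_eq_0_iff:
  assumes "finite A" "\<forall>x\<in>A. x > 0" "\<forall>x\<in>A. x \<le> M"
  shows "(\<Sum>d = 1..M. moebius_mu d * int (v A d) * (int (v A d) - 1)) = 0
     \<longleftrightarrow> (\<forall>x\<in>A. \<forall>y\<in>A. x \<noteq> y \<longrightarrow> \<not> coprime x y)"
  unfolding sum_moebius_mu_v_pairs[OF assms] using assms(1)
  by (subst sum_card_eq_0_iff) auto

lemma sum_moebius_mu_v_prefixes_eq_0_iff: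
  fixes b :: "nat \<Rightarrow> nat"
  assumes "inj_on b {1..k}" "\<forall>j\<in>{1..k}. b j > 0"
  shows "(\<Sum>j = 1..k. \<Sum>d | d dvd b j. moebius_mu d * int (v (b ` {1..j - 1}) d)) = 0
     \<longleftrightarrow> (\<forall>x\<in>b ` {1..k}. \<forall>y\<in>b ` {1..k}. x \<noteq> y \<longrightarrow> \<not> coprime x y)"
proof -
  have "(\<Sum>j = 1..k. \<Sum>d | d dvd b j. moebius_mu d * int (v (b ` {1..j - 1}) d))
      = (\<Sum>j = 1..k. int (card {x\<in>b ` {1..j - 1}. coprime x (b j)}))"
    using assms(2) by (intro sum.cong refl sum_moebius_mu_v_divisors) auto
  moreover have "(\<Sum>j = 1..k. int (card {x\<in>b ` {1..j - 1}. coprime x (b j)})) = 0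
      \<longleftrightarrow> (\<forall>j\<in>{1..k}. \<forall>x\<in>b ` {1..j - 1}. \<not> coprime x (b j))"
    by (subst sum_card_eq_0_iff) auto
  moreover have "(\<forall>j\<in>{1..k}. \<forall>x\<in>b ` {1..j - 1}. \<not> coprime x (b j))
      \<longleftrightarrow> (\<forall>x\<in>b ` {1..k}. \<forall>y\<in>b ` {1..k}. x \<noteq> y \<longrightarrow> \<not> coprime x y)"
    by (rule prefix_pairs_iff_pairs[OF assms(1)]) (simp add: coprime_commute)
  ultimately show ?thesis by (simp only:)
qed

lemma one_less_gcd_iff_not_coprime:
  assumes "(x::nat) > 0"
  shows "1 < gcd x y \<longleftrightarrow> \<not> coprime x y"
proof -
  have "gcd x y > 0" using assms by simp
  then show ?thesis unfolding coprime_iff_gcd_eq_1 by linarith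
qed

theorem theorem5p7:
  fixes k :: nat and a :: "nat \<Rightarrow> nat" and \<tau> :: "nat \<Rightarrow> nat"
  assumes "k \<ge> 1"
    and "inj_on a {1..k}"
    and "\<forall>i\<in>{1..k}. a i > 0"
    and "\<tau> permutes {1..k}"
  defines "A \<equiv> a ` {1..k}"
    and "At \<equiv> (\<lambda>j. a ` \<tau> ` {1..j})"
  shows "((\<forall>x\<in>A. \<forall>y\<in>A. x \<noteq> y \<longrightarrow> gcd x y > 1)
            \<longleftrightarrow> (\<Sum>d = 1..Max A. moebius_mu d * int (v A d) * (int (v A d) - 1)) = 0)
       \<and> ((\<forall>x\<in>A. \<forall>y\<in>A. x \<noteq> y \<longrightarrow> gcd x y > 1)
            \<longleftrightarrow> (\<Sum>j = 1..k. \<Sum>d | d dvd a (\<tau> j). moebius_mu d * int (v (At (j - 1)) d)) = 0)"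
proof -
  define b where "b = a \<circ> \<tau>"
  have \<tau>: "\<tau> ` {1..k} = {1..k}" "inj_on \<tau> {1..k}"
    using permutes_image[OF assms(4)] permutes_inj_on[OF assms(4)] by auto
  have b_image: "b ` S = a ` \<tau> ` S" for S by (auto simp: b_def)
  have b: "inj_on b {1..k}" "b ` {1..k} = A" "At = (\<lambda>j. b ` {1..j})"
    using assms(2) \<tau> comp_inj_on[of \<tau> "{1..k}" a]
    by (simp_all only: b_def[symmetric] A_def At_def b_image)
  have pos: "\<forall>x\<in>A. x > 0" using assms(3) by (auto simp: A_def)
  then have b_pos: "\<forall>j\<in>{1..k}. b j > 0" using b(2) by auto
  have "(\<forall>x\<in>A. \<forall>y\<in>A. x \<noteq> y \<longrightarrow> gcd x y > 1)
      \<longleftrightarrow> (\<forall>x\<in>A. \<forall>y\<in>A. x \<noteq> y \<longrightarrow> \<not> coprime x y)"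
    using pos one_less_gcd_iff_not_coprime by blast
  moreover have "(\<Sum>d = 1..Max A. moebius_mu d * int (v A d) * (int (v A d) - 1)) = 0
      \<longleftrightarrow> (\<forall>x\<in>A. \<forall>y\<in>A. x \<noteq> y \<longrightarrow> \<not> coprime x y)"
    using pos by (intro sum_moebius_mu_v_pairs_eq_0_iff) (auto simp: A_def)
  moreover have "(\<Sum>j = 1..k. \<Sum>d | d dvd a (\<tau> j). moebius_mu d * int (v (At (j - 1)) d))
      = (\<Sum>j = 1..k. \<Sum>d | d dvd b j. moebius_mu d * int (v (b ` {1..j - 1}) d))"
    by (simp add: b(3) b_def)
  moreover have "\<dots> = 0 \<longleftrightarrow> (\<forall>x\<in>A. \<forall>y\<in>A. x \<noteq> y \<longrightarrow> \<not> coprime x y)"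
    using sum_moebius_mu_v_prefixes_eq_0_iff[OF b(1) b_pos] unfolding b(2) .
  ultimately show ?thesis by (simp only:)
qed

end
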